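(* Let $N\ge 2$ be an integer, $h>0$, $\epsilon>0$ and $\Delta t>0$. Let $A$ be the $N\times N$ matrix discretizing the negative second derivative with homogeneous Neumann boundary conditions, i.e. for $V=(v_1,\dots,v_N)^T$, $$(AV)_i=\frac{2v_i-v_{i-1}-v_{i+1}}{h^2},\quad i=1,\dots,N,\qquad\text{with the convention } v_0=v_1,\ v_{N+1}=v_N .$$ Consider the sequence of vectors $U^k\in\mathbb{R}^N$ defined from $U^0$ by the linearized implicit Euler scheme (with zero boundary flux) $$U^{k+1}+\Delta t\, A U^{k+1}+\frac{\Delta t}{\epsilon^2}(U^k)^2U^{k+1}=U^k+\frac{\Delta t}{\epsilon^2}U^k,\qquad k\ge 0,$$ where $(U^k)^2U^{k+1}$ denotes the componentwise product $\big((u^k_i)^2u^{k+1}_i\big)_{i}$. If $\Delta t<\epsilon^2$ and $-1\le U^0\le 1$ componentwise, then $-1\le U^k\le 1$ componentwise for every $k\in\mathbb{N}$.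
   Context: This scheme is the time discretization of the semi-discrete (finite-difference in space) one-dimensional Allen–Cahn equation $u_t-u_{xx}+\frac{1}{\epsilon^2}u(u^2-1)=0$ on $]0,1[$ with Neumann boundary conditions $u_x(0,t)=\alpha(t)$, $u_x(1,t)=0$; the proposition concerns the case of zero control flux $\alpha=0$, in which the boundary source term of the scheme vanishes. Inequalities between vectors are understood componentwise. *)

theory Defs
  imports Complex_Main
begin

text \<open>Vectors in R^N are represented as functions nat => real, components indexed by 1..N.
  Ghost values v_0 = v_1 and v_(N+1) = v_N implement the homogeneous Neumann convention.\<close>

definition ghost_ext :: "nat \<Rightarrow> (nat \<Rightarrow> real) \<Rightarrow> nat \<Rightarrow> real" where
  "ghost_ext N v j = (if j = 0 then v 1 else if j = N + 1 then v N else v j)"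

definition neumann_lap :: "nat \<Rightarrow> real \<Rightarrow> (nat \<Rightarrow> real) \<Rightarrow> nat \<Rightarrow> real" where
  "neumann_lap N h v i = (2 * v i - ghost_ext N v (i - 1) - ghost_ext N v (i + 1)) / h\<^sup>2"

end

theory Submission
  imports Defs
begin

text \<open>At an index where U^(k+1) attains its maximum the Neumann
  Laplacian is nonnegative, so the scheme there gives (1 + c u^2) w \<le> (1 + c) u with
  u = U^k_i, w = U^(k+1)_i and c = dt/eps^2; for |u| \<le> 1 and c \<le> 1 the right-hand side is
  at most 1 + c u^2, hence w \<le> 1. The lower bound follows by applying this to -U, which
  satisfies the same scheme.\<close>

lemma neumann_lap_nonneg_at_max:
  assumes "h > 0" "1 \<le> i" "i \<le> N" and max: "\<And>j. 1 \<le> j \<Longrightarrow> j \<le> N \<Longrightarrow> v j \<le> v i"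
  shows "0 \<le> neumann_lap N h v i"
proof -
  have "ghost_ext N v j \<le> v i" if "j \<le> N + 1" for j
    using that assms(2,3) max by (auto simp: ghost_ext_def)
  then have "ghost_ext N v (i - 1) \<le> v i" "ghost_ext N v (i + 1) \<le> v i"
    using assms(3) by auto
  then show ?thesis
    unfolding neumann_lap_def using assms(1) by (simp add: divide_nonneg_pos)
qed

lemma neumann_lap_uminus: "neumann_lap N h (\<lambda>j. - v j) i = - neumann_lap N h v i"
proof -
  have "ghost_ext N (\<lambda>j. - v j) j = - ghost_ext N v j" for j
    by (simp add: ghost_ext_def)
  then show ?thesis
    unfolding neumann_lap_def minus_divide_left by simp
qed

lemma implicit_step_le_one:
  fixes c u w L :: real
  assumes step: "w + L + c * u\<^sup>2 * w = u + c * u"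
    and "0 \<le> L" "0 \<le> c" "c \<le> 1" "\<bar>u\<bar> \<le> 1"
  shows "w \<le> 1"
proof -
  have "\<bar>c * u\<bar> \<le> 1"
    using assms(3-5) by (simp add: abs_mult mult_le_one)
  then have "0 \<le> (1 - c * u) * (1 - u)"
    using assms(5) by (intro mult_nonneg_nonneg) (auto simp: abs_le_iff)
  then have "u + c * u \<le> 1 + c * u\<^sup>2"
    by (simp add: algebra_simps power2_eq_square)
  with step \<open>0 \<le> L\<close> have "(1 + c * u\<^sup>2) * w \<le> (1 + c * u\<^sup>2) * 1"
    by (simp add: algebra_simps)
  moreover have "0 < 1 + c * u\<^sup>2"
    using \<open>0 \<le> c\<close> by (simp add: add_pos_nonneg)
  ultimately show ?thesis
    by (simp only: mult_le_cancel_left_pos)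
qed

lemma scheme_step_le_one:
  fixes u w :: "nat \<Rightarrow> real"
  assumes "1 \<le> N" "h > 0" "0 \<le> dt" "0 \<le> c" "c \<le> 1"
    and step: "\<And>i. 1 \<le> i \<Longrightarrow> i \<le> N \<Longrightarrow>
        w i + dt * neumann_lap N h w i + c * (u i)\<^sup>2 * w i = u i + c * u i"
    and bound: "\<And>i. 1 \<le> i \<Longrightarrow> i \<le> N \<Longrightarrow> \<bar>u i\<bar> \<le> 1"
    and j: "1 \<le> j" "j \<le> N"
  shows "w j \<le> 1"
proof -
  have "Max (w ` {1..N}) \<in> w ` {1..N}"
    using \<open>1 \<le> N\<close> by (intro Max_in) auto
  then obtain i where i: "1 \<le> i" "i \<le> N" and "w i = Max (w ` {1..N})"
    by auto
  then have max: "w j \<le> w i" if "1 \<le> j" "j \<le> N" for j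
    using that by simp
  have "0 \<le> dt * neumann_lap N h w i"
    using neumann_lap_nonneg_at_max[of h i N w, OF \<open>h > 0\<close> i max] \<open>0 \<le> dt\<close> by simp
  then have "w i \<le> 1"
    using implicit_step_le_one step[OF i] bound[OF i] assms(4,5) by blast
  then show ?thesis
    using max[OF j] by simp
qed

lemma scheme_step_abs_le_one:
  fixes u w :: "nat \<Rightarrow> real"
  assumes "1 \<le> N" "h > 0" "0 \<le> dt" "0 \<le> c" "c \<le> 1"
    and step: "\<And>i. 1 \<le> i \<Longrightarrow> i \<le> N \<Longrightarrow>
        w i + dt * neumann_lap N h w i + c * (u i)\<^sup>2 * w i = u i + c * u i"
    and bound: "\<And>i. 1 \<le> i \<Longrightarrow> i \<le> N \<Longrightarrow> \<bar>u i\<bar> \<le> 1"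
    and j: "1 \<le> j" "j \<le> N"
  shows "\<bar>w j\<bar> \<le> 1"
proof -
  have "- w i + dt * neumann_lap N h (\<lambda>j. - w j) i + c * (- u i)\<^sup>2 * - w i = - u i + c * - u i"
    if "1 \<le> i" "i \<le> N" for i
    using step[OF that] by (simp add: neumann_lap_uminus algebra_simps)
  then have "- w j \<le> 1"
    using scheme_step_le_one[OF assms(1-5), of "\<lambda>j. - w j" "\<lambda>j. - u j"] bound j by simp
  moreover have "w j \<le> 1"
    using scheme_step_le_one[OF assms(1-5) step bound j] .
  ultimately show ?thesis
    by linarith
qed

theorem mainTheorem1:
  fixes N :: nat and h eps dt :: real and U :: "nat \<Rightarrow> nat \<Rightarrow> real"
  assumes "N \<ge> 2" and "h > 0" and "eps > 0" and "dt > 0"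
    and scheme: "\<And>k i. 1 \<le> i \<Longrightarrow> i \<le> N \<Longrightarrow>
        U (Suc k) i + dt * neumann_lap N h (U (Suc k)) i + dt / eps\<^sup>2 * (U k i)\<^sup>2 * U (Suc k) i
          = U k i + dt / eps\<^sup>2 * U k i"
    and "dt < eps\<^sup>2"
    and "\<And>i. 1 \<le> i \<Longrightarrow> i \<le> N \<Longrightarrow> -1 \<le> U 0 i \<and> U 0 i \<le> 1"
  shows "\<forall>k i. 1 \<le> i \<and> i \<le> N \<longrightarrow> -1 \<le> U k i \<and> U k i \<le> 1"
proof -
  have c: "0 \<le> dt / eps\<^sup>2" "dt / eps\<^sup>2 \<le> 1"
    using assms(3,4,6) by auto
  have "\<bar>U k i\<bar> \<le> 1" if "1 \<le> i" "i \<le> N" for k i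
    using that
  proof (induction k arbitrary: i)
    case 0
    then show ?case using assms(7) by (simp add: abs_le_iff)
  next
    case (Suc k)
    have "1 \<le> N" "0 \<le> dt"
      using assms(1,4) by auto
    from scheme_step_abs_le_one[OF this(1) \<open>h > 0\<close> this(2) c scheme Suc.IH Suc.prems]
    show ?case .
  qed
  then show ?thesis
    by (simp add: abs_le_iff)
qed
end
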